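(* Let $T_1,\dots,T_n$ be non-negative, possibly dependent, random variables (component lifetimes) such that the series-system lifetimes below are absolutely continuous. Let $T_D^S$ have survival function $\overline F_D^S(t)=P(T_1>t,\dots,T_n>t)$ and $T_I^S$ have survival function $\overline F_I^S(t)=\prod_{i=1}^n P(T_i>t)$, with failure rates $r_D^S(t)=f_D^S(t)/\overline F_D^S(t)$ and $r_I^S(t)=f_I^S(t)/\overline F_I^S(t)$ (where $f$ denotes the corresponding density), and $r_I^S(t)>0$. Define the relative errors $$E_S^{r}(t)=\frac{r_D^S(t)-r_I^S(t)}{r_I^S(t)},\qquad E_S^{\overline F}(t)=\frac{\overline F_D^S(t)-\overline F_I^S(t)}{\overline F_I^S(t)}.$$ Let $t_0>0$. If $E_S^r(t)\le 0$ (resp. $\ge 0$) for all $t\le t_0$, then $E_S^{\overline F}(t)\ge 0$ (resp. $\le 0$) for $t\le t_0$.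
   Context: $T_D^S$ is the lifetime of the series system with the actual (dependent) components and $T_I^S$ the lifetime of the same series system under the assumption that the components are independent with the same marginals; times $t$ range over $[0,\infty)$. *)

theory Defs
  imports "HOL-Probability.Probability"
begin

definition surv_D :: "'a measure \<Rightarrow> (nat \<Rightarrow> 'a \<Rightarrow> real) \<Rightarrow> nat \<Rightarrow> real \<Rightarrow> real" where
  "surv_D M T n t = measure M {\<omega> \<in> space M. \<forall>i<n. T i \<omega> > t}"

definition surv_I :: "'a measure \<Rightarrow> (nat \<Rightarrow> 'a \<Rightarrow> real) \<Rightarrow> nat \<Rightarrow> real \<Rightarrow> real" where
  "surv_I M T n t = (\<Prod>i<n. measure M {\<omega> \<in> space M. T i \<omega> > t})"

definition failure_rate :: "(real \<Rightarrow> real) \<Rightarrow> (real \<Rightarrow> real) \<Rightarrow> real \<Rightarrow> real" where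
  "failure_rate f Fbar t = f t / Fbar t"

definition rel_error :: "(real \<Rightarrow> real) \<Rightarrow> (real \<Rightarrow> real) \<Rightarrow> real \<Rightarrow> real" where
  "rel_error gD gI t = (gD t - gI t) / gI t"

definition is_density_of_surv :: "(real \<Rightarrow> real) \<Rightarrow> (real \<Rightarrow> real) \<Rightarrow> bool" where
  "is_density_of_surv f Fbar \<longleftrightarrow> f \<in> borel_measurable lborel \<and> (\<forall>x. f x \<ge> 0) \<and>
     (\<forall>t. set_integrable lborel {t<..} f \<and> Fbar t = (LINT x:{t<..}|lborel. f x))"

end

theory Submission
  imports Defs
begin

text \<open>The theorem rests on a comparison principle for survival functions with densities: if
  \<open>F\<close> and \<open>G\<close> start at the same value and \<open>F\<close> has the smaller failure rate on \<open>[a, b]\<close>, then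
  \<open>F \<ge> G\<close> on \<open>[a, b]\<close>. Otherwise take the last point \<open>q\<close> before \<open>b\<close> with \<open>F q \<ge> G q\<close>; just to
  the right of \<open>q\<close> we have \<open>0 < F < G\<close>, so the failure-rate inequality gives \<open>f \<le> g\<close> there, and
  integrating shows that \<open>F - G\<close> cannot decrease, a contradiction. Both survival functions of
  the series system equal \<open>1\<close> at time \<open>0\<close>, so the principle applies on \<open>[0, t0]\<close> in either direction.\<close>

lemma last_nonneg_point_before_negative:
  fixes w :: "real \<Rightarrow> real"
  assumes "continuous_on {a..b} w" "a \<le> b" "w a \<ge> 0" "w b < 0"
  obtains q where "a \<le> q" "q < b" "w q \<ge> 0" "\<And>r. q < r \<Longrightarrow> r \<le> b \<Longrightarrow> w r < 0"
proof
  define S where "S = {x \<in> {a..b}. 0 \<le> w x}"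
  have "closed S" unfolding S_def
    by (rule continuous_on_closed_Collect_le) (use assms in \<open>auto intro: continuous_intros\<close>)
  moreover have "S \<noteq> {}" "bdd_above S"
    using assms unfolding S_def by (auto intro: bdd_aboveI[of _ b])
  ultimately have q: "Sup S \<in> S" and upper: "\<And>x. x \<in> S \<Longrightarrow> x \<le> Sup S"
    by (auto intro: closed_contains_Sup cSup_upper)
  show "a \<le> Sup S" "0 \<le> w (Sup S)" "Sup S < b"
    using q upper[of a] assms unfolding S_def by (auto simp: less_le)
  fix r assume "Sup S < r" "r \<le> b"
  then have "r \<notin> S" and "r \<in> {a..b}"
    using upper[of r] \<open>a \<le> Sup S\<close> by auto
  then show "w r < 0" unfolding S_def by auto
qed

lemma surv_nonneg:
  assumes "is_density_of_surv f F" shows "F t \<ge> 0"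
  using assms unfolding is_density_of_surv_def set_lebesgue_integral_def
  by (auto intro!: integral_nonneg_AE simp: indicator_def)

lemma surv_diff_eq_set_integral:
  assumes "is_density_of_surv f F" "a < b"
  shows "set_integrable lborel {a<..b} f" "F a - F b = (LINT x:{a<..b}|lborel. f x)"
proof -
  have int: "set_integrable lborel {a<..} f" "set_integrable lborel {b<..} f"
    and eq: "F a = (LINT x:{a<..}|lborel. f x)" "F b = (LINT x:{b<..}|lborel. f x)"
    using assms unfolding is_density_of_surv_def by auto
  show int_ab: "set_integrable lborel {a<..b} f"
    by (rule set_integrable_subset[OF int(1)]) auto
  have split: "{a<..} = {a<..b} \<union> {b<..}" using assms(2) by auto
  have "{a<..b} \<inter> {b<..} = {}" by auto
  from set_integral_Un[OF this int_ab int(2)]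
  have "(LINT x:{a<..}|lborel. f x) = (LINT x:{a<..b}|lborel. f x) + (LINT x:{b<..}|lborel. f x)"
    by (simp only: split)
  then show "F a - F b = (LINT x:{a<..b}|lborel. f x)" using eq by simp
qed

lemma surv_antimono:
  assumes "is_density_of_surv f F" "a \<le> b" shows "F b \<le> F a"
proof (cases "a = b")
  case False
  then have "a < b" using assms by auto
  have "0 \<le> (LINT x:{a<..b}|lborel. f x)"
    using assms unfolding is_density_of_surv_def set_lebesgue_integral_def
    by (auto intro!: integral_nonneg_AE simp: indicator_def)
  then show ?thesis using surv_diff_eq_set_integral(2)[OF assms(1) \<open>a < b\<close>] by simp
qed simp

lemma surv_isCont:
  assumes "is_density_of_surv f F" shows "isCont F x"
proof -
  define a where "a = x - 1"
  have meas: "f \<in> borel_measurable lborel" and int: "set_integrable lborel {a-1<..} f"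
    using assms unfolding is_density_of_surv_def by auto
  have "continuous_on UNIV (\<lambda>b. LBINT y:{a..b}. f y)"
    by (rule continuous_on_LBINT, rule set_integrable_subset[OF int]) auto
  then have cont: "continuous_on {a<..} (\<lambda>t. F a - (LBINT y:{a..t}. f y))"
    by (intro continuous_intros continuous_on_subset[OF \<open>continuous_on UNIV _\<close>]) auto
  have eq: "F t = F a - (LBINT y:{a..t}. f y)" if "t \<in> {a<..}" for t
  proof -
    have "(LBINT y:{a..t}. f y) = (LBINT y:{a<..t}. f y)"
    proof (rule set_integral_cong_set)
      show "set_borel_measurable lborel {a..t} f" "set_borel_measurable lborel {a<..t} f"
        using meas unfolding set_borel_measurable_def by auto
      show "AE x in lborel. (x \<in> {a<..t}) = (x \<in> {a..t})"
        using AE_lborel_singleton[of a] by eventually_elim auto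
    qed
    then show ?thesis using surv_diff_eq_set_integral(2)[OF assms, of a t] that by simp
  qed
  have "continuous_on {a<..} F"
    using continuous_on_cong[OF refl eq, of "{a<..}"] cont by simp
  then show ?thesis
    by (rule continuous_on_interior) (auto simp: a_def interior_open)
qed

lemma surv_pos_if_failure_rate_pos:
  assumes "is_density_of_surv f F" "failure_rate f F t > 0" shows "F t > 0"
  using assms surv_nonneg[OF assms(1), of t] unfolding failure_rate_def
  by (cases "F t = 0") auto

lemma surv_ge_if_failure_rate_le:
  assumes dF: "is_density_of_surv f F" and dG: "is_density_of_surv g G"
    and "a \<le> b" and "G a \<le> F a"
    and rate: "\<And>s. s \<in> {a<..b} \<Longrightarrow> failure_rate f F s \<le> failure_rate g G s"
  shows "G b \<le> F b"
proof (rule ccontr)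
  assume "\<not> G b \<le> F b"
  have cont: "continuous_on {a..b} (\<lambda>x. F x - G x)"
    using surv_isCont[OF dF] surv_isCont[OF dG]
    by (auto intro!: continuous_at_imp_continuous_on continuous_intros)
  obtain q where q: "a \<le> q" "q < b" "0 \<le> F q - G q"
    and below: "\<And>r. q < r \<Longrightarrow> r \<le> b \<Longrightarrow> F r - G r < 0"
    by (rule last_nonneg_point_before_negative[OF cont \<open>a \<le> b\<close>])
      (use \<open>G a \<le> F a\<close> \<open>\<not> G b \<le> F b\<close> in simp_all)
  have "0 < G q"
    using below[OF q(2) order_refl] surv_nonneg[OF dF, of b] surv_antimono[OF dG, of q b] q(2)
    by linarith
  then have "0 < F q" using q(3) by linarith
  moreover have "(F \<longlongrightarrow> F q) (at_right q)"
    using surv_isCont[OF dF, of q] by (simp add: isCont_def filterlim_at_split)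
  ultimately have "eventually (\<lambda>x. 0 < F x \<and> x \<in> {q<..<b}) (at_right q)"
    using eventually_at_right_real[OF q(2)] by (intro eventually_conj order_tendstoD(1))
  then obtain r where r: "q < r" "r < b" "0 < F r"
    using eventually_happens'[of "at_right q"] by auto
  have "f s \<le> g s" if s: "s \<in> {q<..r}" for s
  proof -
    have "0 < F s" using r surv_antimono[OF dF, of s r] s by auto
    moreover have "F s < G s" using below s r by auto
    moreover have "f s / F s \<le> g s / G s" using rate[of s] s q r unfolding failure_rate_def by auto
    moreover have "g s \<ge> 0" using dG unfolding is_density_of_surv_def by auto
    ultimately have "f s \<le> g s / G s * F s" by (simp add: divide_le_eq)
    also have "\<dots> \<le> g s"
      using \<open>F s < G s\<close> \<open>g s \<ge> 0\<close> \<open>0 < F s\<close> by (simp add: divide_le_eq mult_left_mono)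
    finally show ?thesis .
  qed
  then have "(LINT x:{q<..r}|lborel. f x) \<le> (LINT x:{q<..r}|lborel. g x)"
    by (intro set_integral_mono surv_diff_eq_set_integral(1)[OF dF r(1)]
        surv_diff_eq_set_integral(1)[OF dG r(1)])
  then have "F q - F r \<le> G q - G r"
    using surv_diff_eq_set_integral(2)[OF dF r(1)] surv_diff_eq_set_integral(2)[OF dG r(1)] by simp
  then show False using q(3) below[OF r(1)] r(2) by fastforce
qed

lemma isCont_eq_if_eq_left:
  fixes g :: "real \<Rightarrow> 'b::t2_space"
  assumes "isCont g x" "\<And>t. t < x \<Longrightarrow> g t = c"
  shows "g x = c"
proof -
  have "(g \<longlongrightarrow> g x) (at_left x)"
    using assms(1) by (simp add: isCont_def filterlim_at_split)
  moreover have "(g \<longlongrightarrow> c) (at_left x)"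
    by (rule tendsto_eventually) (simp add: eventually_at_left_field assms(2) exI[of _ "x - 1"])
  ultimately show ?thesis by (rule tendsto_unique[rotated]) simp
qed

lemma surv_D_eq_1_if_neg:
  assumes "prob_space M" "\<And>i \<omega>. i < n \<Longrightarrow> \<omega> \<in> space M \<Longrightarrow> T i \<omega> \<ge> 0" "t < 0"
  shows "surv_D M T n t = 1"
proof -
  have "{\<omega> \<in> space M. \<forall>i<n. T i \<omega> > t} = space M"
    using assms(2,3) by force
  then show ?thesis
    unfolding surv_D_def using prob_space.prob_space[OF assms(1)] by simp
qed

lemma surv_I_eq_1_if_neg:
  assumes "prob_space M" "\<And>i \<omega>. i < n \<Longrightarrow> \<omega> \<in> space M \<Longrightarrow> T i \<omega> \<ge> 0" "t < 0"
  shows "surv_I M T n t = 1"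
proof -
  have "{\<omega> \<in> space M. T i \<omega> > t} = space M" if "i < n" for i
    using assms(2)[OF that] assms(3) by force
  then show ?thesis
    unfolding surv_I_def using prob_space.prob_space[OF assms(1)] by simp
qed

lemma rel_error_nonneg_iff:
  assumes "h t > 0" shows "0 \<le> rel_error g h t \<longleftrightarrow> h t \<le> g t"
  using assms by (simp add: rel_error_def zero_le_divide_iff)

lemma rel_error_nonpos_iff:
  assumes "h t > 0" shows "rel_error g h t \<le> 0 \<longleftrightarrow> g t \<le> h t"
  using assms by (simp add: rel_error_def divide_le_0_iff)

theorem mainTheorem3:
  fixes M :: "'a measure" and T :: "nat \<Rightarrow> 'a \<Rightarrow> real" and n :: nat
    and fD fI :: "real \<Rightarrow> real" and t0 :: real
  assumes "prob_space M"
    and "\<And>i. i < n \<Longrightarrow> T i \<in> borel_measurable M"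
    and "\<And>i \<omega>. i < n \<Longrightarrow> \<omega> \<in> space M \<Longrightarrow> T i \<omega> \<ge> 0"
    and "is_density_of_surv fD (surv_D M T n)"
    and "is_density_of_surv fI (surv_I M T n)"
    and "\<And>t. t \<ge> 0 \<Longrightarrow> failure_rate fI (surv_I M T n) t > 0"
    and "t0 > 0"
  shows "((\<forall>t\<in>{0..t0}. rel_error (failure_rate fD (surv_D M T n)) (failure_rate fI (surv_I M T n)) t \<le> 0)
            \<longrightarrow> (\<forall>t\<in>{0..t0}. rel_error (surv_D M T n) (surv_I M T n) t \<ge> 0))
       \<and> ((\<forall>t\<in>{0..t0}. rel_error (failure_rate fD (surv_D M T n)) (failure_rate fI (surv_I M T n)) t \<ge> 0)
            \<longrightarrow> (\<forall>t\<in>{0..t0}. rel_error (surv_D M T n) (surv_I M T n) t \<le> 0))"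
proof -
  let ?FD = "surv_D M T n" and ?FI = "surv_I M T n"
  let ?rD = "failure_rate fD ?FD" and ?rI = "failure_rate fI ?FI"
  have start: "?FD 0 = ?FI 0"
    using isCont_eq_if_eq_left[OF surv_isCont[OF assms(4)] surv_D_eq_1_if_neg[OF assms(1,3)]]
      isCont_eq_if_eq_left[OF surv_isCont[OF assms(5)] surv_I_eq_1_if_neg[OF assms(1,3)]]
    by simp
  have FI_pos: "0 < ?FI t" if "0 \<le> t" for t
    using surv_pos_if_failure_rate_pos[OF assms(5,6)] that .
  show ?thesis
  proof (intro conjI impI ballI)
    fix t assume "\<forall>s\<in>{0..t0}. rel_error ?rD ?rI s \<le> 0" and t: "t \<in> {0..t0}"
    then have "?FI t \<le> ?FD t"
      using rel_error_nonpos_iff[where h = ?rI, OF assms(6)] start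
      by (intro surv_ge_if_failure_rate_le[OF assms(4,5), of 0 t]) auto
    then show "0 \<le> rel_error ?FD ?FI t"
      using rel_error_nonneg_iff FI_pos t by simp
  next
    fix t assume "\<forall>s\<in>{0..t0}. 0 \<le> rel_error ?rD ?rI s" and t: "t \<in> {0..t0}"
    then have "?FD t \<le> ?FI t"
      using rel_error_nonneg_iff[where h = ?rI, OF assms(6)] start
      by (intro surv_ge_if_failure_rate_le[OF assms(5,4), of 0 t]) auto
    then show "rel_error ?FD ?FI t \<le> 0"
      using rel_error_nonpos_iff FI_pos t by simp
  qed
qed

end
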